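(* Fix $p\in(0,1)$ and $u\in(0,1)$, and let $\Theta_\infty(u)$ be the random variable defined in the context. Then for $k=1,2,\dots$, $$E[\Theta_\infty^k(u)]=\frac{1-p}{1-pu^k-(1-p)(1-u)^k}\sum_{j=0}^{k-1}\binom kj u^{k-j}(1-u)^jE[\Theta_\infty^j(u)].$$
   Context: Let $G_0,G_1,\dots$ be IID random variables with $P(G_0=n)=p^{n-1}(1-p)$ for $n\in\{1,2,\dots\}$, let $T_k=G_0+\dots+G_k$, and define $\Theta_\infty(u)=\sum_{k=0}^\infty u^{T_k}\left(\frac{1-u}{u}\right)^k$. (Its law is the unique probability measure $\mu_u$ on $[0,1]$ with $\mu_u=(1-p)\mu_u\circ S_0^{-1}+p\,\mu_u\circ S_1^{-1}$, where $S_0(x)=u+(1-u)x$, $S_1(x)=ux$.) Here $E[\Theta_\infty^0(u)]=1$. *)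

theory Defs
  imports "HOL-Probability.Probability"
begin

definition T_sum :: "(nat \<Rightarrow> 'a \<Rightarrow> nat) \<Rightarrow> nat \<Rightarrow> 'a \<Rightarrow> nat" where
  "T_sum G k \<omega> = (\<Sum>i\<le>k. G i \<omega>)"

definition Theta_inf :: "real \<Rightarrow> (nat \<Rightarrow> 'a \<Rightarrow> nat) \<Rightarrow> 'a \<Rightarrow> real" where
  "Theta_inf u G \<omega> = (\<Sum>k. u ^ (T_sum G k \<omega>) * ((1 - u) / u) ^ k)"

end

theory Submission
  imports Defs
begin

text \<open>Write \<open>\<Theta>\<^sub>m\<close> for \<open>\<Theta>\<^sub>\<infinity>(u)\<close> built from the shifted gaps \<open>G\<^sub>m, G\<^sub>m\<^sub>+\<^sub>1, \<dots>\<close>.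
  Peeling off the first gap gives \<open>\<Theta>\<^sub>m = u\<^bsup>G\<^sub>m - 1\<^esup> (u + (1 - u) \<Theta>\<^sub>m\<^sub>+\<^sub>1)\<close> with
  independent factors. Taking \<open>k\<close>-th powers, using \<open>E[q\<^bsup>G - 1\<^esup>] = (1 - p) / (1 - p q)\<close> for
  \<open>q = u\<^sup>k\<close> and expanding binomially expresses \<open>E[\<Theta>\<^sub>m\<^sup>k]\<close> through the moments of
  \<open>\<Theta>\<^sub>m\<^sub>+\<^sub>1\<close> of order at most \<open>k\<close>. Once the moments are known not to depend on \<open>m\<close>,
  moving the term of order \<open>k\<close> to the left-hand side produces the denominator
  \<open>1 - p u\<^sup>k - (1 - p) (1 - u)\<^sup>k\<close>.\<close>

lemma (in prob_space) sums_expectation_nat_valued: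
  fixes X :: "'a \<Rightarrow> nat" and f :: "nat \<Rightarrow> real"
  assumes X: "X \<in> measurable M (count_space UNIV)" and f: "\<And>n. \<bar>f n\<bar> \<le> B"
  shows "(\<lambda>n. f n * prob {\<omega> \<in> space M. X \<omega> = n}) sums expectation (\<lambda>\<omega>. f (X \<omega>))"
proof -
  define A where "A n = {\<omega> \<in> space M. X \<omega> = n}" for n
  have A_events: "A n \<in> events" for n
  proof -
    have "A n = X -` {n} \<inter> space M" by (auto simp: A_def)
    then show ?thesis using measurable_sets[OF X] by simp
  qed
  have integral_term: "(\<integral>\<omega>. norm (f n * indicator (A n) \<omega>) \<partial>M) = \<bar>f n\<bar> * prob (A n)" for n
    using A_events by (simp add: abs_mult)
  have "(\<lambda>n. prob (A n)) sums prob (\<Union>n. A n)"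
    using A_events by (intro finite_measure_UNION) (auto simp: disjoint_family_on_def A_def)
  then have "summable (\<lambda>n. B * prob (A n))"
    by (intro summable_mult sums_summable)
  then have summable_norms: "summable (\<lambda>n. \<integral>\<omega>. norm (f n * indicator (A n) \<omega>) \<partial>M)"
    unfolding integral_term
    by (rule summable_comparison_test'[where N=0]) (simp add: abs_mult f mult_right_mono)
  have pointwise: "(\<lambda>n. f n * indicator (A n) \<omega>) sums f (X \<omega>)" if "\<omega> \<in> space M" for \<omega>
  proof -
    have "(\<lambda>n. f n * indicator (A n) \<omega>) = (\<lambda>n. if n = X \<omega> then f n else 0)"
      using that by (auto simp: A_def indicator_def)
    then show ?thesis by (simp add: sums_single)
  qed
  have pointwise_abs: "summable (\<lambda>n. norm (f n * indicator (A n) \<omega>))" if "\<omega> \<in> space M" for \<omega>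
  proof -
    have "(\<lambda>n. norm (f n * indicator (A n) \<omega>)) = (\<lambda>n. if n = X \<omega> then \<bar>f n\<bar> else 0)"
      using that by (auto simp: A_def indicator_def)
    then show ?thesis by simp
  qed
  have "(\<lambda>n. \<integral>\<omega>. f n * indicator (A n) \<omega> \<partial>M) sums (\<integral>\<omega>. (\<Sum>n. f n * indicator (A n) \<omega>) \<partial>M)"
    by (rule sums_integral[OF _ AE_I2[OF pointwise_abs] summable_norms])
      (rule integrable_real_mult_indicator[OF A_events], simp)
  also have "(\<integral>\<omega>. (\<Sum>n. f n * indicator (A n) \<omega>) \<partial>M) = expectation (\<lambda>\<omega>. f (X \<omega>))"
    using pointwise by (intro Bochner_Integration.integral_cong) (auto simp: sums_iff)
  finally show ?thesis
    using A_events by (simp add: A_def)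
qed

lemma (in prob_space) expectation_power_geometric:
  fixes X :: "'a \<Rightarrow> nat" and p q :: real
  assumes X: "X \<in> measurable M (count_space UNIV)"
    and X_pos: "\<And>\<omega>. \<omega> \<in> space M \<Longrightarrow> 1 \<le> X \<omega>"
    and X_distr: "\<And>n. 1 \<le> n \<Longrightarrow> prob {\<omega> \<in> space M. X \<omega> = n} = p ^ (n - 1) * (1 - p)"
    and p: "0 \<le> p" "p < 1" and q: "0 \<le> q" "q \<le> 1"
  shows "expectation (\<lambda>\<omega>. q ^ (X \<omega> - 1)) = (1 - p) / (1 - p * q)"
proof -
  let ?f = "\<lambda>n. q ^ (n - 1) * prob {\<omega> \<in> space M. X \<omega> = n}"
  have "?f sums expectation (\<lambda>\<omega>. q ^ (X \<omega> - 1))"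
    using q by (intro sums_expectation_nat_valued[OF X, where B=1]) (simp add: power_le_one)
  moreover have "?f 0 = 0"
  proof -
    have "{\<omega> \<in> space M. X \<omega> = 0} = {}"
      using X_pos by fastforce
    then show ?thesis
      by (metis measure_empty mult_zero_right)
  qed
  ultimately have "(\<lambda>n. ?f (Suc n)) sums expectation (\<lambda>\<omega>. q ^ (X \<omega> - 1))"
    by (subst sums_Suc_iff) simp
  moreover have "?f (Suc n) = (1 - p) * (p * q) ^ n" for n
    by (simp add: X_distr power_mult_distrib)
  moreover have "(\<lambda>n. (1 - p) * (p * q) ^ n) sums ((1 - p) * (1 / (1 - p * q)))"
    using p q mult_left_le[of q p] by (intro sums_mult geometric_sums) auto
  ultimately show ?thesis
    by (simp add: sums_unique2)
qed

lemma bounded_affine_recurrence_const: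
  fixes a :: "nat \<Rightarrow> real"
  assumes rec: "\<And>n. a n = \<alpha> * a (Suc n) + \<beta>" and contracting: "\<bar>\<alpha>\<bar> < 1"
    and bounded: "\<And>n. \<bar>a n\<bar> \<le> B"
  shows "a n = \<beta> / (1 - \<alpha>)"
proof -
  define L where "L = \<beta> / (1 - \<alpha>)"
  have "1 - \<alpha> \<noteq> 0"
    using contracting by auto
  then have "\<beta> = (1 - \<alpha>) * L"
    by (simp add: L_def)
  then have step: "a n - L = \<alpha> * (a (Suc n) - L)" for n
    using rec[of n] by (simp add: algebra_simps)
  have iterate: "a n - L = \<alpha> ^ N * (a (n + N) - L)" for N
  proof (induction N)
    case (Suc N)
    then have "a n - L = \<alpha> ^ N * (\<alpha> * (a (Suc (n + N)) - L))"
      using step[of "n + N"] by simp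
    then show ?case
      by (simp add: mult_ac)
  qed simp
  have bound: "\<bar>a n - L\<bar> \<le> \<bar>\<alpha>\<bar> ^ N * (B + \<bar>L\<bar>)" for N
    unfolding iterate[of N] abs_mult power_abs
    using bounded[of "n + N"] by (intro mult_left_mono) auto
  have "(\<lambda>N. \<bar>\<alpha>\<bar> ^ N * (B + \<bar>L\<bar>)) \<longlonglongrightarrow> 0 * (B + \<bar>L\<bar>)"
    using contracting by (intro tendsto_mult LIMSEQ_power_zero tendsto_const) auto
  then have "\<bar>a n - L\<bar> \<le> 0 * (B + \<bar>L\<bar>)"
    by (rule LIMSEQ_le_const) (use bound in auto)
  then show ?thesis
    by (simp add: L_def)
qed

definition theta :: "real \<Rightarrow> (nat \<Rightarrow> nat) \<Rightarrow> real" where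
  "theta u x = (\<Sum>k. u ^ (\<Sum>i\<le>k. x i) * ((1 - u) / u) ^ k)"

lemma theta_term_bounds:
  fixes u :: real
  assumes u: "0 < u" "u < 1" and x: "\<And>i. 1 \<le> x i"
  shows "0 \<le> u ^ (\<Sum>i\<le>k. x i) * ((1 - u) / u) ^ k"
    and "u ^ (\<Sum>i\<le>k. x i) * ((1 - u) / u) ^ k \<le> u * (1 - u) ^ k"
proof -
  show "0 \<le> u ^ (\<Sum>i\<le>k. x i) * ((1 - u) / u) ^ k"
    using u by simp
  have "Suc k \<le> (\<Sum>i\<le>k. x i)"
    using sum_mono[of "{..k}" "\<lambda>_. 1::nat" x] x by simp
  then have "u ^ (\<Sum>i\<le>k. x i) * ((1 - u) / u) ^ k \<le> u ^ Suc k * ((1 - u) / u) ^ k"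
    using u by (intro mult_right_mono power_decreasing) auto
  also have "\<dots> = u * (1 - u) ^ k"
    using u by (simp add: power_divide)
  finally show "u ^ (\<Sum>i\<le>k. x i) * ((1 - u) / u) ^ k \<le> u * (1 - u) ^ k" .
qed

lemma summable_theta:
  fixes u :: real
  assumes "0 < u" "u < 1" "\<And>i. 1 \<le> x i"
  shows "summable (\<lambda>k. u ^ (\<Sum>i\<le>k. x i) * ((1 - u) / u) ^ k)"
proof -
  have "summable (\<lambda>k. u * (1 - u) ^ k)"
    using assms by (intro summable_mult summable_geometric) auto
  then show ?thesis
    by (rule summable_comparison_test'[where N=0]) (use theta_term_bounds[OF assms] in auto)
qed

lemma theta_nonneg:
  assumes "0 < u" "u < 1" "\<And>i. 1 \<le> x i"
  shows "0 \<le> theta u x"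
  unfolding theta_def using theta_term_bounds[OF assms] summable_theta[OF assms]
  by (intro suminf_nonneg) auto

lemma theta_le_one:
  assumes u: "0 < u" "u < 1" and x: "\<And>i. 1 \<le> x i"
  shows "theta u x \<le> 1"
proof -
  have "theta u x \<le> (\<Sum>k. u * (1 - u) ^ k)"
    unfolding theta_def using theta_term_bounds[OF assms] summable_theta[OF assms] u
    by (intro suminf_le summable_mult summable_geometric) auto
  also have "\<dots> = 1"
    using u by (simp add: suminf_mult suminf_geometric)
  finally show ?thesis .
qed

lemma theta_unfold:
  assumes u: "0 < u" "u < 1" and x: "\<And>i. 1 \<le> x i"
  shows "theta u x = u ^ (x 0 - 1) * (u + (1 - u) * theta u (\<lambda>i. x (Suc i)))"
proof -
  let ?f = "\<lambda>k. u ^ (\<Sum>i\<le>k. x i) * ((1 - u) / u) ^ k"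
  let ?g = "\<lambda>k. u ^ (\<Sum>i\<le>k. x (Suc i)) * ((1 - u) / u) ^ k"
  have shift: "?f (Suc k) = u ^ x 0 * ((1 - u) / u) * ?g k" for k
    unfolding sum.atMost_Suc_shift by (simp add: power_add)
  have summable: "summable ?f"
    by (rule summable_theta[OF assms])
  have "(\<Sum>k. ?f (Suc k)) = u ^ x 0 * ((1 - u) / u) * theta u (\<lambda>i. x (Suc i))"
    unfolding shift theta_def by (intro suminf_mult summable_theta) (use u x in auto)
  then have "theta u x = u ^ x 0 + u ^ x 0 * ((1 - u) / u) * theta u (\<lambda>i. x (Suc i))"
    unfolding theta_def suminf_split_head[OF summable] by simp
  also have "u ^ x 0 = u ^ (x 0 - 1) * u"
    using x[of 0] by (simp add: power_Suc2[symmetric])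
  also have "u ^ (x 0 - 1) * u + u ^ (x 0 - 1) * u * ((1 - u) / u) * theta u (\<lambda>i. x (Suc i))
      = u ^ (x 0 - 1) * (u + (1 - u) * theta u (\<lambda>i. x (Suc i)))"
    using u by (simp add: field_simps)
  finally show ?thesis .
qed

lemma measurable_theta:
  assumes "\<And>i. j i \<in> I"
  shows "(\<lambda>x. theta u (\<lambda>i. x (j i))) \<in> borel_measurable (PiM I (\<lambda>_. count_space UNIV))"
proof -
  have "(\<lambda>x. u ^ x (j i)) \<in> borel_measurable (PiM I (\<lambda>_. count_space UNIV))" for i
    by (rule measurable_compose[OF measurable_component_singleton[OF assms]]) simp
  then have "(\<lambda>x. \<Sum>k. (\<Prod>i\<le>k. u ^ x (j i)) * ((1 - u) / u) ^ k)
      \<in> borel_measurable (PiM I (\<lambda>_. count_space UNIV))"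
    by measurable
  then show ?thesis
    unfolding theta_def power_sum .
qed

lemma moment_denominator_pos:
  fixes p u :: real
  assumes p: "0 \<le> p" "p \<le> 1" and u: "0 < u" "u < 1" and k: "1 \<le> k"
  shows "(1 - p) * (1 - u) ^ k < 1 - p * u ^ k"
proof -
  have uk: "u ^ k < 1" and vk: "(1 - u) ^ k < 1"
    using u k by (simp_all add: power_less_one_iff)
  show ?thesis
  proof (cases "p = 0")
    case False
    then have "p * u ^ k < p"
      using uk p mult_strict_left_mono[of "u ^ k" 1 p] by simp
    moreover have "(1 - p) * (1 - u) ^ k \<le> 1 - p"
      using vk p by (simp add: mult_left_le)
    ultimately show ?thesis
      by linarith
  qed (simp add: vk)
qed

locale geometric_theta = prob_space +
  fixes G :: "nat \<Rightarrow> 'a \<Rightarrow> nat" and p u :: real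
  assumes indep_G: "indep_vars (\<lambda>_. count_space UNIV) G UNIV"
    and p: "0 < p" "p < 1" and u: "0 < u" "u < 1"
    and G_ge_1: "\<And>i \<omega>. \<omega> \<in> space M \<Longrightarrow> 1 \<le> G i \<omega>"
    and G_distr: "\<And>i n. 1 \<le> n \<Longrightarrow> prob {\<omega> \<in> space M. G i \<omega> = n} = p ^ (n - 1) * (1 - p)"
begin

definition Theta :: "nat \<Rightarrow> 'a \<Rightarrow> real" where
  "Theta m \<omega> = theta u (\<lambda>i. G (m + i) \<omega>)"

lemma measurable_G: "G i \<in> measurable M (count_space UNIV)"
  using indep_G unfolding indep_vars_def by auto

lemma borel_measurable_Theta: "Theta m \<in> borel_measurable M"
proof -
  have "(\<lambda>\<omega>. \<lambda>i\<in>UNIV. G i \<omega>) \<in> measurable M (PiM UNIV (\<lambda>_. count_space UNIV))"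
    by (intro measurable_restrict measurable_G)
  from measurable_compose[OF this measurable_theta[of "\<lambda>i. m + i" UNIV u]]
  show ?thesis
    unfolding Theta_def[abs_def] by simp
qed

lemma Theta_nonneg: "\<omega> \<in> space M \<Longrightarrow> 0 \<le> Theta m \<omega>"
  unfolding Theta_def using G_ge_1 u by (intro theta_nonneg) auto

lemma Theta_le_one: "\<omega> \<in> space M \<Longrightarrow> Theta m \<omega> \<le> 1"
  unfolding Theta_def using G_ge_1 u by (intro theta_le_one) auto

lemma Theta_unfold:
  "\<omega> \<in> space M \<Longrightarrow> Theta m \<omega> = u ^ (G m \<omega> - 1) * (u + (1 - u) * Theta (Suc m) \<omega>)"
  unfolding Theta_def using theta_unfold[OF u, of "\<lambda>i. G (m + i) \<omega>"] G_ge_1 by simp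

lemma indep_var_G_Theta:
  fixes f :: "nat \<Rightarrow> real"
  assumes g: "g \<in> borel_measurable borel"
  shows "indep_var borel (\<lambda>\<omega>. f (G m \<omega>)) borel (\<lambda>\<omega>. g (Theta (Suc m) \<omega>))"
proof -
  have "indep_var (PiM {m} (\<lambda>_. count_space UNIV)) (\<lambda>\<omega>. restrict (\<lambda>i. G i \<omega>) {m})
      (PiM {Suc m..} (\<lambda>_. count_space UNIV)) (\<lambda>\<omega>. restrict (\<lambda>i. G i \<omega>) {Suc m..})"
    by (rule indep_var_restrict[OF indep_G]) auto
  moreover have "(\<lambda>x. f (x m)) \<in> borel_measurable (PiM {m} (\<lambda>_. count_space UNIV))"
    by (rule measurable_compose[OF measurable_component_singleton]) simp_all
  moreover have "(\<lambda>x. g (theta u (\<lambda>i. x (Suc m + i))))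
      \<in> borel_measurable (PiM {Suc m..} (\<lambda>_. count_space UNIV))"
    by (rule measurable_compose[OF measurable_theta g]) simp
  ultimately have "indep_var borel ((\<lambda>x. f (x m)) \<circ> (\<lambda>\<omega>. restrict (\<lambda>i. G i \<omega>) {m}))
      borel ((\<lambda>x. g (theta u (\<lambda>i. x (Suc m + i)))) \<circ> (\<lambda>\<omega>. restrict (\<lambda>i. G i \<omega>) {Suc m..}))"
    by (rule indep_var_compose)
  then show ?thesis
    by (simp add: o_def Theta_def)
qed

lemma integrable_Theta_power: "integrable M (\<lambda>\<omega>. Theta m \<omega> ^ k)"
  using Theta_nonneg Theta_le_one borel_measurable_Theta
  by (intro integrable_const_bound[where B=1]) (auto intro!: power_le_one)

lemma abs_expectation_Theta_power_le_one: "\<bar>expectation (\<lambda>\<omega>. Theta m \<omega> ^ k)\<bar> \<le> 1"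
proof -
  have "0 \<le> expectation (\<lambda>\<omega>. Theta m \<omega> ^ k)"
    using Theta_nonneg by (intro integral_nonneg_AE) auto
  moreover have "expectation (\<lambda>\<omega>. Theta m \<omega> ^ k) \<le> 1"
    using Theta_nonneg Theta_le_one
    by (intro integral_le_const integrable_Theta_power) (auto intro!: power_le_one)
  ultimately show ?thesis
    by simp
qed

lemma expectation_Theta_power_step:
  "expectation (\<lambda>\<omega>. Theta m \<omega> ^ k) = (1 - p) / (1 - p * u ^ k) *
     (\<Sum>j\<le>k. real (k choose j) * u ^ (k - j) * (1 - u) ^ j * expectation (\<lambda>\<omega>. Theta (Suc m) \<omega> ^ j))"
proof -
  let ?X = "\<lambda>\<omega>. (u ^ k) ^ (G m \<omega> - 1)"
  let ?Y = "\<lambda>\<omega>. (u + (1 - u) * Theta (Suc m) \<omega>) ^ k"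
  have Y_bounds: "0 \<le> u + (1 - u) * Theta (Suc m) \<omega> \<and> u + (1 - u) * Theta (Suc m) \<omega> \<le> 1"
    if "\<omega> \<in> space M" for \<omega>
  proof -
    have "(1 - u) * Theta (Suc m) \<omega> \<le> 1 - u"
      using u Theta_le_one[OF that] by (intro mult_left_le) auto
    moreover have "0 \<le> (1 - u) * Theta (Suc m) \<omega>"
      using u Theta_nonneg[OF that] by simp
    ultimately show ?thesis
      using u by linarith
  qed
  have integrable_X: "integrable M ?X"
  proof (rule integrable_const_bound[where B=1])
    show "?X \<in> borel_measurable M"
      by (rule measurable_compose[OF measurable_G]) simp
    have "(u ^ k) ^ n \<le> 1" for n
      using u by (simp add: power_le_one)
    then show "AE \<omega> in M. norm (?X \<omega>) \<le> 1"
      using u by simp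
  qed
  have integrable_Y: "integrable M ?Y"
  proof (rule integrable_const_bound[where B=1])
    show "?Y \<in> borel_measurable M"
      using borel_measurable_Theta by measurable
    show "AE \<omega> in M. norm (?Y \<omega>) \<le> 1"
      using Y_bounds by (simp add: power_le_one)
  qed
  have "Theta m \<omega> ^ k = ?X \<omega> * ?Y \<omega>" if "\<omega> \<in> space M" for \<omega>
  proof -
    have "Theta m \<omega> ^ k = (u ^ (G m \<omega> - 1)) ^ k * ?Y \<omega>"
      using Theta_unfold[OF that, of m] by (simp add: power_mult_distrib)
    then show ?thesis
      by (metis power_mult mult.commute)
  qed
  then have "expectation (\<lambda>\<omega>. Theta m \<omega> ^ k) = expectation (\<lambda>\<omega>. ?X \<omega> * ?Y \<omega>)"
    by (intro Bochner_Integration.integral_cong) simp_all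
  also have "\<dots> = expectation ?X * expectation ?Y"
    by (intro indep_var_lebesgue_integral indep_var_G_Theta integrable_X integrable_Y) simp
  also have "expectation ?X = (1 - p) / (1 - p * u ^ k)"
    using p u G_ge_1 G_distr
    by (intro expectation_power_geometric[OF measurable_G]) (auto intro: power_le_one)
  also have "?Y = (\<lambda>\<omega>. \<Sum>j\<le>k. real (k choose j) * u ^ (k - j) * (1 - u) ^ j * Theta (Suc m) \<omega> ^ j)"
  proof
    fix \<omega>
    have "?Y \<omega> = ((1 - u) * Theta (Suc m) \<omega> + u) ^ k"
      by (simp add: add.commute)
    also have "\<dots> = (\<Sum>j\<le>k. real (k choose j) * ((1 - u) * Theta (Suc m) \<omega>) ^ j * u ^ (k - j))"
      by (rule binomial_ring)
    finally show "?Y \<omega> = (\<Sum>j\<le>k. real (k choose j) * u ^ (k - j) * (1 - u) ^ j * Theta (Suc m) \<omega> ^ j)"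
      by (simp add: power_mult_distrib mult_ac)
  qed
  also have "expectation \<dots> = (\<Sum>j\<le>k. real (k choose j) * u ^ (k - j) * (1 - u) ^ j
      * expectation (\<lambda>\<omega>. Theta (Suc m) \<omega> ^ j))"
    by (simp add: integrable_Theta_power)
  finally show ?thesis .
qed

text \<open>The shifted sequences \<open>G\<^sub>m, G\<^sub>m\<^sub>+\<^sub>1, \<dots>\<close> all have the same law, but instead of
  proving this we let the step above relate the moment sequences \<open>m \<mapsto> E[\<Theta>\<^sub>m\<^sup>k]\<close>:
  by induction on \<open>k\<close> they satisfy a contracting affine recurrence, and being bounded
  they are constant.\<close>

lemma expectation_Theta_power_shift:
  "expectation (\<lambda>\<omega>. Theta m \<omega> ^ k) = expectation (\<lambda>\<omega>. Theta 0 \<omega> ^ k)"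
proof (induction k arbitrary: m rule: less_induct)
  case (less k)
  show ?case
  proof (cases "k = 0")
    case True
    then show ?thesis
      by simp
  next
    case False
    define c where "c = (1 - p) / (1 - p * u ^ k)"
    define \<beta> where "\<beta> = c * (\<Sum>j<k. real (k choose j) * u ^ (k - j) * (1 - u) ^ j
      * expectation (\<lambda>\<omega>. Theta 0 \<omega> ^ j))"
    have den: "(1 - p) * (1 - u) ^ k < 1 - p * u ^ k"
      using False p u by (intro moment_denominator_pos) auto
    have rec: "expectation (\<lambda>\<omega>. Theta n \<omega> ^ k)
        = c * (1 - u) ^ k * expectation (\<lambda>\<omega>. Theta (Suc n) \<omega> ^ k) + \<beta>" for n
    proof -
      have "(\<Sum>j<k. real (k choose j) * u ^ (k - j) * (1 - u) ^ j
            * expectation (\<lambda>\<omega>. Theta (Suc n) \<omega> ^ j))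
          = (\<Sum>j<k. real (k choose j) * u ^ (k - j) * (1 - u) ^ j
            * expectation (\<lambda>\<omega>. Theta 0 \<omega> ^ j))"
        by (intro sum.cong refl) (metis lessThan_iff less.IH)
      then show ?thesis
        unfolding expectation_Theta_power_step[of n k]
          sum.lessThan_Suc[of _ k, unfolded lessThan_Suc_atMost]
        by (simp add: c_def \<beta>_def algebra_simps)
    qed
    have "0 \<le> (1 - p) * (1 - u) ^ k"
      using p u by simp
    with den have contraction: "\<bar>c * (1 - u) ^ k\<bar> < 1"
      by (simp add: c_def)
    have "expectation (\<lambda>\<omega>. Theta n \<omega> ^ k) = \<beta> / (1 - c * (1 - u) ^ k)" for n
      by (rule bounded_affine_recurrence_const[where a="\<lambda>n. expectation (\<lambda>\<omega>. Theta n \<omega> ^ k)",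
            OF rec contraction abs_expectation_Theta_power_le_one])
    then show ?thesis
      by simp
  qed
qed

lemma expectation_Theta_power_recurrence:
  assumes "1 \<le> k"
  shows "expectation (\<lambda>\<omega>. Theta 0 \<omega> ^ k) =
    (1 - p) / (1 - p * u ^ k - (1 - p) * (1 - u) ^ k) *
    (\<Sum>j<k. real (k choose j) * u ^ (k - j) * (1 - u) ^ j * expectation (\<lambda>\<omega>. Theta 0 \<omega> ^ j))"
proof -
  define e where "e = expectation (\<lambda>\<omega>. Theta 0 \<omega> ^ k)"
  define S where "S = (\<Sum>j<k. real (k choose j) * u ^ (k - j) * (1 - u) ^ j
    * expectation (\<lambda>\<omega>. Theta 0 \<omega> ^ j))"
  have den: "(1 - p) * (1 - u) ^ k < 1 - p * u ^ k"
    using assms p u by (intro moment_denominator_pos) auto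
  have "e = (1 - p) / (1 - p * u ^ k) * (\<Sum>j\<le>k. real (k choose j) * u ^ (k - j) * (1 - u) ^ j
      * expectation (\<lambda>\<omega>. Theta (Suc 0) \<omega> ^ j))"
    unfolding e_def by (rule expectation_Theta_power_step)
  also have "(\<Sum>j\<le>k. real (k choose j) * u ^ (k - j) * (1 - u) ^ j
      * expectation (\<lambda>\<omega>. Theta (Suc 0) \<omega> ^ j)) = S + (1 - u) ^ k * e"
    unfolding sum.lessThan_Suc[of _ k, unfolded lessThan_Suc_atMost]
    by (simp add: S_def e_def expectation_Theta_power_shift[of "Suc 0"])
  finally have "e = (1 - p) / (1 - p * u ^ k) * (S + (1 - u) ^ k * e)" .
  moreover have "0 \<le> (1 - p) * (1 - u) ^ k"
    using p u by simp
  ultimately have "e * (1 - p * u ^ k - (1 - p) * (1 - u) ^ k) = (1 - p) * S"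
    using den by (simp add: field_simps)
  with den show ?thesis
    unfolding e_def[symmetric] S_def[symmetric] by (simp add: field_simps)
qed

end

lemma Theta_inf_eq_theta: "Theta_inf u G \<omega> = theta u (\<lambda>i. G i \<omega>)"
  by (simp add: Theta_inf_def T_sum_def theta_def)

theorem proposition1:
  fixes M :: "'a measure" and G :: "nat \<Rightarrow> 'a \<Rightarrow> nat" and p u :: real and k :: nat
  assumes "prob_space M"
    and "0 < p" "p < 1" "0 < u" "u < 1"
    and "prob_space.indep_vars M (\<lambda>_. count_space UNIV) G UNIV"
    and "\<And>i \<omega>. \<omega> \<in> space M \<Longrightarrow> G i \<omega> \<ge> 1"
    and "\<And>i n. n \<ge> 1 \<Longrightarrow> measure M {\<omega> \<in> space M. G i \<omega> = n} = p ^ (n - 1) * (1 - p)"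
    and "k \<ge> 1"
  shows "prob_space.expectation M (\<lambda>\<omega>. Theta_inf u G \<omega> ^ k) =
    (1 - p) / (1 - p * u ^ k - (1 - p) * (1 - u) ^ k) *
    (\<Sum>j<k. real (k choose j) * u ^ (k - j) * (1 - u) ^ j *
       prob_space.expectation M (\<lambda>\<omega>. Theta_inf u G \<omega> ^ j))"
proof -
  interpret geometric_theta M G p u
    by (rule geometric_theta.intro[OF assms(1) geometric_theta_axioms.intro[OF assms(6,2-5,7,8)]])
  show ?thesis
    using expectation_Theta_power_recurrence[OF assms(9)]
    by (simp add: Theta_inf_eq_theta Theta_def)
qed

end
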